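(* (a) For every $A\in\mathcal{A}$, $\widehat{\chi_A}=|\chi_A\rangle\langle\chi_A|=\mu(A)$. (b) For every random variable $f$ and every $\alpha\in\mathbb{R}$, $\widehat{\alpha f}=\alpha\widehat f$. (c) If $0\le f_1\le f_2\le\cdots$ is an increasing sequence of random variables converging pointwise to a random variable $f$, then $\widehat{f_i}\to\widehat f$ in the operator norm topology. (d) If $f,g,h$ are random variables with mutually disjoint supports, then $$\widehat{f+g+h}=\widehat{f+g}+\widehat{f+h}+\widehat{g+h}-\widehat f-\widehat g-\widehat h.$$
   Context: $(\Omega,\mathcal{A},\nu)$ is a probability space and $H=L_2(\Omega,\mathcal{A},\nu)$ is the complex Hilbert space with inner product $\langle f,g\rangle=\int\bar f g\,d\nu$. A random variable is a real-valued $f\in H$. For $A\in\mathcal{A}$, $\chi_A$ is its characteristic function and $\mu(A)=|\chi_A\rangle\langle\chi_A|$ is the operator $g\mapsto\left(\int_A g\,d\nu\right)\chi_A$. For a random variable $f\ge 0$, its quantization $\widehat f$ is the operator on $H$ given by $(\widehat f g)(y)=\int\min[f(x),f(y)]\,g(x)\,d\nu(x)$. For an arbitrary random variable $f$, write $f=f^+-f^-$ with $f^+=\max(f,0)$, $f^-=-\min(f,0)$, and define $\widehat f=\widehat{f^+}-\widehat{f^-}$. (Here $\widehat{\alpha f}$ etc. denotes the quantization of the random variable $\alpha f$.) *)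

theory Defs
  imports "HOL-Probability.Probability"
begin

text \<open>Elements of H = L2(Omega, A, nu) (complex), represented by functions.\<close>
definition L2 :: "'a measure \<Rightarrow> ('a \<Rightarrow> complex) set" where
  "L2 M = {g. g \<in> borel_measurable M \<and> integrable M (\<lambda>x. (cmod (g x))\<^sup>2)}"

definition l2norm :: "'a measure \<Rightarrow> ('a \<Rightarrow> complex) \<Rightarrow> real" where
  "l2norm M g = sqrt (LINT x|M. (cmod (g x))\<^sup>2)"

definition rand_var :: "'a measure \<Rightarrow> ('a \<Rightarrow> real) \<Rightarrow> bool" where
  "rand_var M f \<longleftrightarrow> f \<in> borel_measurable M \<and> integrable M (\<lambda>x. (f x)\<^sup>2)"

text \<open>Operators on H are represented as maps of functions; two operators are equal
  if they agree (almost everywhere) on every element of H.\<close>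
definition op_eq :: "'a measure \<Rightarrow> (('a \<Rightarrow> complex) \<Rightarrow> 'a \<Rightarrow> complex)
    \<Rightarrow> (('a \<Rightarrow> complex) \<Rightarrow> 'a \<Rightarrow> complex) \<Rightarrow> bool" where
  "op_eq M T S \<longleftrightarrow> (\<forall>g\<in>L2 M. AE y in M. T g y = S g y)"

text \<open>Operator norm (valued in ennreal, so that it is always defined).\<close>
definition op_norm :: "'a measure \<Rightarrow> (('a \<Rightarrow> complex) \<Rightarrow> 'a \<Rightarrow> complex) \<Rightarrow> ennreal" where
  "op_norm M T = (SUP g\<in>{g\<in>L2 M. l2norm M g \<le> 1}. ennreal (l2norm M (T g)))"

definition quant_pos :: "'a measure \<Rightarrow> ('a \<Rightarrow> real) \<Rightarrow> ('a \<Rightarrow> complex) \<Rightarrow> 'a \<Rightarrow> complex" where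
  "quant_pos M f g y = (LINT x|M. complex_of_real (min (f x) (f y)) * g x)"

definition quant :: "'a measure \<Rightarrow> ('a \<Rightarrow> real) \<Rightarrow> ('a \<Rightarrow> complex) \<Rightarrow> 'a \<Rightarrow> complex" where
  "quant M f g y = quant_pos M (\<lambda>x. max (f x) 0) g y - quant_pos M (\<lambda>x. - min (f x) 0) g y"

definition mu_op :: "'a measure \<Rightarrow> 'a set \<Rightarrow> ('a \<Rightarrow> complex) \<Rightarrow> 'a \<Rightarrow> complex" where
  "mu_op M A g y = (LINT x|M. indicator A x * g x) * indicator A y"

end

theory Submission
  imports Defs
begin

(* Parts (a) and (b) are pointwise identities of the kernels: min(chi_A x, chi_A y) =
   chi_A x chi_A y, and min commutes with nonnegative scalars (negative scalars swap f^+
   and f^-).  Part (d) integrates a pointwise inclusion-exclusion identity for min of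
   disjointly supported nonnegative functions; the only analytic input is that all kernels
   are integrable (products of square-integrable functions).  Part (c) rests on the
   estimate  ||Q_k - Q_f|| <= 2 ||f - k||_2  for random variables 0 <= k <= f, derived from
   the Lipschitz property of min and the Cauchy-Schwarz inequality; monotone convergence
   f_i -> f implies ||f - f_i||_2 -> 0 by dominated convergence. *)

text \<open>The product of two square-integrable real functions is integrable,
  since |fg| is bounded by f^2 + g^2.\<close>

lemma integrable_mult_square_integrable:
  fixes f g :: "'a \<Rightarrow> real"
  assumes [measurable]: "f \<in> borel_measurable M" "g \<in> borel_measurable M"
    and f2: "integrable M (\<lambda>x. (f x)\<^sup>2)" and g2: "integrable M (\<lambda>x. (g x)\<^sup>2)"
  shows "integrable M (\<lambda>x. f x * g x)"
proof (rule Bochner_Integration.integrable_bound)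
  show "integrable M (\<lambda>x. (f x)\<^sup>2 + (g x)\<^sup>2)" using f2 g2 by simp
  show "AE x in M. norm (f x * g x) \<le> norm ((f x)\<^sup>2 + (g x)\<^sup>2)"
  proof (intro AE_I2)
    fix x
    have "\<bar>f x\<bar> * \<bar>g x\<bar> \<le> (f x)\<^sup>2 + (g x)\<^sup>2"
      using sum_squares_bound[of "\<bar>f x\<bar>" "\<bar>g x\<bar>"]
        mult_nonneg_nonneg[OF abs_ge_zero abs_ge_zero, of "f x" "g x"]
      by (simp only: power2_abs)
    then show "norm (f x * g x) \<le> norm ((f x)\<^sup>2 + (g x)\<^sup>2)"
      by (simp add: abs_mult)
  qed
qed measurable

text \<open>Cauchy-Schwarz inequality for nonnegative square-integrable real functions, obtained
  from the library's version for nonnegative (extended) integrals.\<close>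

lemma integral_Cauchy_Schwarz:
  fixes f g :: "'a \<Rightarrow> real"
  assumes [measurable]: "f \<in> borel_measurable M" "g \<in> borel_measurable M"
    and f2: "integrable M (\<lambda>x. (f x)\<^sup>2)" and g2: "integrable M (\<lambda>x. (g x)\<^sup>2)"
    and f0: "\<And>x. 0 \<le> f x" and g0: "\<And>x. 0 \<le> g x"
  shows "(LINT x|M. f x * g x) \<le> sqrt (LINT x|M. (f x)\<^sup>2) * sqrt (LINT x|M. (g x)\<^sup>2)"
proof -
  define F where "F = (LINT x|M. (f x)\<^sup>2)"
  define G where "G = (LINT x|M. (g x)\<^sup>2)"
  define I where "I = (LINT x|M. f x * g x)"
  have fg: "integrable M (\<lambda>x. f x * g x)"
    using integrable_mult_square_integrable[OF assms(1-4)] .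
  have nonneg: "0 \<le> F" "0 \<le> G" "0 \<le> I"
    unfolding F_def G_def I_def using f0 g0 by (auto intro!: integral_nonneg_AE)
  have I: "(\<integral>\<^sup>+x. ennreal (f x) * ennreal (g x) \<partial>M) = ennreal I"
    using nn_integral_eq_integral[OF fg] f0 g0 by (simp add: I_def ennreal_mult)
  have F: "(\<integral>\<^sup>+x. ennreal (f x) ^ 2 \<partial>M) = ennreal F"
    using nn_integral_eq_integral[OF f2] f0 by (simp add: F_def ennreal_power)
  have G: "(\<integral>\<^sup>+x. ennreal (g x) ^ 2 \<partial>M) = ennreal G"
    using nn_integral_eq_integral[OF g2] g0 by (simp add: G_def ennreal_power)
  have "ennreal I ^ 2 \<le> ennreal F * ennreal G"
    using Cauchy_Schwarz_nn_integral[of "\<lambda>x. ennreal (f x)" M "\<lambda>x. ennreal (g x)"]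
    unfolding I F G by simp
  then have "I\<^sup>2 \<le> F * G"
    using nonneg by (simp add: ennreal_power ennreal_mult[symmetric])
  then have "sqrt (I\<^sup>2) \<le> sqrt (F * G)"
    by (rule real_sqrt_le_mono)
  then show ?thesis
    using nonneg by (simp add: I_def F_def G_def real_sqrt_mult)
qed

lemma rand_var_dominated:
  assumes "rand_var M f" "k \<in> borel_measurable M" "\<And>x. \<bar>k x\<bar> \<le> \<bar>f x\<bar>"
  shows "rand_var M k"
  unfolding rand_var_def
proof
  show "integrable M (\<lambda>x. (k x)\<^sup>2)"
  proof (rule Bochner_Integration.integrable_bound)
    show "integrable M (\<lambda>x. (f x)\<^sup>2)" using assms(1) by (simp add: rand_var_def)
    show "(\<lambda>x. (k x)\<^sup>2) \<in> borel_measurable M" using assms(2) by measurable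
    show "AE x in M. norm ((k x)\<^sup>2) \<le> norm ((f x)\<^sup>2)"
      using assms(3) by (intro AE_I2) (simp add: abs_le_square_iff)
  qed
qed (rule assms(2))

text \<open>Random variables are closed under addition, because (f + g)^2 <= 2 f^2 + 2 g^2.\<close>

lemma rand_var_add:
  assumes "rand_var M f" "rand_var M g"
  shows "rand_var M (\<lambda>x. f x + g x)"
  unfolding rand_var_def
proof
  have [measurable]: "f \<in> borel_measurable M" "g \<in> borel_measurable M"
    using assms by (auto simp: rand_var_def)
  show "(\<lambda>x. f x + g x) \<in> borel_measurable M" by measurable
  show "integrable M (\<lambda>x. (f x + g x)\<^sup>2)"
  proof (rule Bochner_Integration.integrable_bound)
    show "integrable M (\<lambda>x. 2 * (f x)\<^sup>2 + 2 * (g x)\<^sup>2)"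
      using assms by (simp add: rand_var_def)
    show "(\<lambda>x. (f x + g x)\<^sup>2) \<in> borel_measurable M" by measurable
    show "AE x in M. norm ((f x + g x)\<^sup>2) \<le> norm (2 * (f x)\<^sup>2 + 2 * (g x)\<^sup>2)"
    proof (intro AE_I2)
      fix x
      have "(f x + g x)\<^sup>2 \<le> 2 * (f x)\<^sup>2 + 2 * (g x)\<^sup>2"
        using sum_squares_bound[of "f x" "g x"] by (simp add: power2_sum)
      then show "norm ((f x + g x)\<^sup>2) \<le> norm (2 * (f x)\<^sup>2 + 2 * (g x)\<^sup>2)" by simp
    qed
  qed
qed

lemma rand_var_gap:
  assumes "rand_var M k" "rand_var M f" "\<And>x. 0 \<le> k x" "\<And>x. k x \<le> f x"
  shows "rand_var M (\<lambda>x. f x - k x)"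
proof (rule rand_var_dominated[OF assms(2)])
  have [measurable]: "k \<in> borel_measurable M" "f \<in> borel_measurable M"
    using assms(1,2) by (auto simp: rand_var_def)
  show "(\<lambda>x. f x - k x) \<in> borel_measurable M" by measurable
  show "\<bar>f x - k x\<bar> \<le> \<bar>f x\<bar>" for x using assms(3,4)[of x] by simp
qed

lemma L2_cmod_rand_var:
  assumes "u \<in> L2 M"
  shows "rand_var M (\<lambda>x. cmod (u x))"
proof -
  have [measurable]: "u \<in> borel_measurable M" using assms by (simp add: L2_def)
  show ?thesis using assms unfolding rand_var_def L2_def by simp
qed

lemma l2norm_nonneg: "0 \<le> l2norm M u"
  unfolding l2norm_def by (intro real_sqrt_ge_zero integral_nonneg_AE) simp

definition pos_part :: "('a \<Rightarrow> real) \<Rightarrow> 'a \<Rightarrow> real" where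
  "pos_part f x = max (f x) 0"

definition neg_part :: "('a \<Rightarrow> real) \<Rightarrow> 'a \<Rightarrow> real" where
  "neg_part f x = - min (f x) 0"

lemma quant_split: "quant M f g y = quant_pos M (pos_part f) g y - quant_pos M (neg_part f) g y"
  by (simp add: quant_def pos_part_def[abs_def] neg_part_def[abs_def])

lemma pos_part_nonneg: "0 \<le> pos_part f x" and neg_part_nonneg: "0 \<le> neg_part f x"
  by (simp_all add: pos_part_def neg_part_def)

lemma rand_var_pos_part: "rand_var M f \<Longrightarrow> rand_var M (pos_part f)"
  and rand_var_neg_part: "rand_var M f \<Longrightarrow> rand_var M (neg_part f)"
  by (rule rand_var_dominated[of M f];
      auto simp: pos_part_def[abs_def] neg_part_def[abs_def] rand_var_def)+

lemma quant_nonneg: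
  assumes "\<And>x. 0 \<le> f x"
  shows "quant M f = quant_pos M f"
proof -
  have "pos_part f = f" "neg_part f = (\<lambda>x. 0)"
    using assms by (auto simp: pos_part_def neg_part_def fun_eq_iff intro: antisym)
  then show ?thesis by (simp add: fun_eq_iff quant_split quant_pos_def)
qed

text \<open>For a nonnegative random variable k and u in H, the kernel min(k x, c) u(x) of the
  quantization is integrable; hence quant_pos is given by a genuine Bochner integral.\<close>

lemma quant_kernel_integrable:
  assumes "rand_var M k" "\<And>x. 0 \<le> k x" "0 \<le> c" "u \<in> L2 M"
  shows "integrable M (\<lambda>x. complex_of_real (min (k x) c) * u x)"
proof (rule Bochner_Integration.integrable_bound)
  have [measurable]: "k \<in> borel_measurable M" "u \<in> borel_measurable M"
    using assms(1,4) by (auto simp: rand_var_def L2_def)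
  show "integrable M (\<lambda>x. k x * cmod (u x))"
    using assms(1) L2_cmod_rand_var[OF assms(4)]
    by (intro integrable_mult_square_integrable) (auto simp: rand_var_def)
  show "(\<lambda>x. complex_of_real (min (k x) c) * u x) \<in> borel_measurable M" by measurable
  show "AE x in M. norm (complex_of_real (min (k x) c) * u x) \<le> norm (k x * cmod (u x))"
    using assms(2,3) by (intro AE_I2) (simp add: norm_mult abs_mult mult_right_mono)
qed

text \<open>Part (a): the quantization of an indicator function is the rank-one operator mu(A),
  because min(chi_A x, chi_A y) = chi_A x chi_A y.\<close>

lemma quant_indicator: "quant M (indicator A) g y = mu_op M A g y"
proof -
  have "quant M (indicator A) = quant_pos M (indicator A)"
    by (rule quant_nonneg) simp
  moreover have "(\<lambda>x. complex_of_real (min (indicator A x) (indicator A y)) * g x)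
      = (\<lambda>x. indicator A y * (indicator A x * g x))"
    by (auto simp: indicator_def fun_eq_iff)
  ultimately show ?thesis by (simp add: quant_pos_def mu_op_def mult.commute)
qed

lemma quant_pos_scale:
  assumes "0 \<le> c"
  shows "quant_pos M (\<lambda>x. c * k x) g y = complex_of_real c * quant_pos M k g y"
proof -
  have "(\<lambda>x. complex_of_real (min (c * k x) (c * k y)) * g x)
      = (\<lambda>x. complex_of_real c * (complex_of_real (min (k x) (k y)) * g x))"
  proof
    fix x
    have "min (c * k x) (c * k y) = c * min (k x) (k y)"
      using assms by (simp add: min_mult_distrib_left)
    then show "complex_of_real (min (c * k x) (c * k y)) * g x
        = complex_of_real c * (complex_of_real (min (k x) (k y)) * g x)" by simp
  qed
  then show ?thesis by (simp add: quant_pos_def)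
qed

lemma pos_part_scale:
  assumes "0 \<le> c"
  shows "pos_part (\<lambda>x. c * f x) = (\<lambda>x. c * pos_part f x)"
    and "neg_part (\<lambda>x. c * f x) = (\<lambda>x. c * neg_part f x)"
  using assms by (simp_all add: pos_part_def neg_part_def fun_eq_iff max_mult_distrib_left
      min_mult_distrib_left)

lemma quant_scale_nonneg:
  assumes "0 \<le> c"
  shows "quant M (\<lambda>x. c * f x) g y = complex_of_real c * quant M f g y"
  using assms by (simp add: quant_split pos_part_scale quant_pos_scale right_diff_distrib)

lemma pos_part_uminus: "pos_part (\<lambda>x. - f x) = neg_part f" "neg_part (\<lambda>x. - f x) = pos_part f"
  by (simp_all add: pos_part_def neg_part_def fun_eq_iff max_def min_def)

lemma quant_uminus: "quant M (\<lambda>x. - f x) g y = - quant M f g y"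
  by (simp add: quant_split pos_part_uminus)

lemma quant_scale: "quant M (\<lambda>x. \<alpha> * f x) g y = complex_of_real \<alpha> * quant M f g y"
proof (cases "0 \<le> \<alpha>")
  case True
  then show ?thesis by (rule quant_scale_nonneg)
next
  case False
  then have "quant M (\<lambda>x. \<alpha> * f x) g y = complex_of_real (- \<alpha>) * quant M (\<lambda>x. - f x) g y"
    using quant_scale_nonneg[of "- \<alpha>" M "\<lambda>x. - f x"] by simp
  then show ?thesis by (simp add: quant_uminus)
qed

lemma min_inclusion_exclusion:
  fixes a1 b1 c1 a2 b2 c2 :: real
  assumes "0 \<le> a1" "0 \<le> b1" "0 \<le> c1" "0 \<le> a2" "0 \<le> b2" "0 \<le> c2"
    and "a1 * b1 = 0" "a1 * c1 = 0" "b1 * c1 = 0" "a2 * b2 = 0" "a2 * c2 = 0" "b2 * c2 = 0"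
  shows "min (a1 + b1 + c1) (a2 + b2 + c2) = min (a1 + b1) (a2 + b2) + min (a1 + c1) (a2 + c2)
     + min (b1 + c1) (b2 + c2) - min a1 a2 - min b1 b2 - min c1 c2"
  using assms by (auto simp: min_def)

text \<open>Part (d) for nonnegative random variables: integrate the pointwise identity, which is
  legitimate since all six kernels are integrable.\<close>

lemma quant_pos_disjoint_sum:
  assumes rv: "rand_var M p" "rand_var M q" "rand_var M r"
    and nonneg: "\<And>x. 0 \<le> p x" "\<And>x. 0 \<le> q x" "\<And>x. 0 \<le> r x"
    and disj: "\<And>x. p x * q x = 0" "\<And>x. p x * r x = 0" "\<And>x. q x * r x = 0"
    and u: "u \<in> L2 M"
  shows "quant_pos M (\<lambda>x. p x + q x + r x) u y =
     quant_pos M (\<lambda>x. p x + q x) u y + quant_pos M (\<lambda>x. p x + r x) u y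
     + quant_pos M (\<lambda>x. q x + r x) u y - quant_pos M p u y - quant_pos M q u y - quant_pos M r u y"
proof -
  let ?K = "\<lambda>k x. complex_of_real (min (k x) (k y)) * u x"
  have int: "integrable M (?K k)" if "rand_var M k" "\<And>x. 0 \<le> k x" for k
    using quant_kernel_integrable[OF that _ u] that(2) by blast
  have kernel: "?K (\<lambda>x. p x + q x + r x) x = ?K (\<lambda>x. p x + q x) x + ?K (\<lambda>x. p x + r x) x
     + ?K (\<lambda>x. q x + r x) x - ?K p x - ?K q x - ?K r x" for x
  proof -
    have "?K (\<lambda>x. p x + q x + r x) x = complex_of_real (min (p x + q x) (p y + q y)
        + min (p x + r x) (p y + r y) + min (q x + r x) (q y + r y)
        - min (p x) (p y) - min (q x) (q y) - min (r x) (r y)) * u x"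
      by (simp only: min_inclusion_exclusion nonneg disj)
    also have "\<dots> = ?K (\<lambda>x. p x + q x) x + ?K (\<lambda>x. p x + r x) x
        + ?K (\<lambda>x. q x + r x) x - ?K p x - ?K q x - ?K r x"
      by (simp add: algebra_simps)
    finally show ?thesis .
  qed
  show ?thesis
    unfolding quant_pos_def kernel
    using int[OF rand_var_add[OF rand_var_add[OF rv(1,2)] rv(3)]]
      int[OF rand_var_add[OF rv(1,2)]] int[OF rand_var_add[OF rv(1,3)]]
      int[OF rand_var_add[OF rv(2,3)]] int[OF rv(1)] int[OF rv(2)] int[OF rv(3)] nonneg
    by (simp add: add_nonneg_nonneg)
qed

lemma max_add_disjoint:
  fixes a b :: real
  assumes "a * b = 0"
  shows "max (a + b) 0 = max a 0 + max b 0" and "- min (a + b) 0 = - min a 0 + - min b 0"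
  using assms by auto

lemma pos_part_add:
  assumes "\<And>x. f x * g x = 0"
  shows "pos_part (\<lambda>x. f x + g x) = (\<lambda>x. pos_part f x + pos_part g x)"
    and "neg_part (\<lambda>x. f x + g x) = (\<lambda>x. neg_part f x + neg_part g x)"
  unfolding pos_part_def neg_part_def fun_eq_iff using max_add_disjoint[OF assms] by blast+

lemma pos_part_mult_disjoint:
  assumes "f x * g x = 0"
  shows "pos_part f x * pos_part g x = 0" and "neg_part f x * neg_part g x = 0"
  using assms by (auto simp: pos_part_def neg_part_def)

text \<open>Part (d) in general: split f, g, h into positive and negative parts, which are again
  disjointly supported, and apply the nonnegative case to both.\<close>

lemma quant_disjoint_sum:
  assumes rv: "rand_var M f" "rand_var M g" "rand_var M h"
    and disj: "\<And>x. f x * g x = 0" "\<And>x. f x * h x = 0" "\<And>x. g x * h x = 0"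
    and u: "u \<in> L2 M"
  shows "quant M (\<lambda>x. f x + g x + h x) u y =
     quant M (\<lambda>x. f x + g x) u y + quant M (\<lambda>x. f x + h x) u y
     + quant M (\<lambda>x. g x + h x) u y - quant M f u y - quant M g u y - quant M h u y"
proof -
  have disj3: "(f x + g x) * h x = 0" for x by (simp only: distrib_right disj(2,3) add_0)
  note split = quant_split[of M _ u y] pos_part_add[OF disj(1)] pos_part_add[OF disj(2)]
    pos_part_add[OF disj(3)] pos_part_add[OF disj3]
  have pos: "quant_pos M (\<lambda>x. pos_part f x + pos_part g x + pos_part h x) u y =
     quant_pos M (\<lambda>x. pos_part f x + pos_part g x) u y + quant_pos M (\<lambda>x. pos_part f x + pos_part h x) u y
     + quant_pos M (\<lambda>x. pos_part g x + pos_part h x) u y - quant_pos M (pos_part f) u y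
     - quant_pos M (pos_part g) u y - quant_pos M (pos_part h) u y"
    by (intro quant_pos_disjoint_sum rand_var_pos_part rv pos_part_nonneg
        pos_part_mult_disjoint disj u)
  have neg: "quant_pos M (\<lambda>x. neg_part f x + neg_part g x + neg_part h x) u y =
     quant_pos M (\<lambda>x. neg_part f x + neg_part g x) u y + quant_pos M (\<lambda>x. neg_part f x + neg_part h x) u y
     + quant_pos M (\<lambda>x. neg_part g x + neg_part h x) u y - quant_pos M (neg_part f) u y
     - quant_pos M (neg_part g) u y - quant_pos M (neg_part h) u y"
    by (intro quant_pos_disjoint_sum rand_var_neg_part rv neg_part_nonneg
        pos_part_mult_disjoint disj u)
  show ?thesis unfolding split pos neg by (simp add: algebra_simps)
qed

lemma min_lipschitz: "\<bar>min (a::real) b - min a' b'\<bar> \<le> \<bar>a - a'\<bar> + \<bar>b - b'\<bar>"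
  by (auto simp: min_def)

lemma min_kernel_diff_bound:
  fixes a b a' b' :: real
  assumes "a \<le> a'" "b \<le> b'"
  shows "cmod (complex_of_real (min a b) * z - complex_of_real (min a' b') * z)
    \<le> ((a' - a) + (b' - b)) * cmod z"
proof -
  have "cmod (complex_of_real (min a b) * z - complex_of_real (min a' b') * z)
      = \<bar>min a b - min a' b'\<bar> * cmod z"
    by (simp flip: left_diff_distrib of_real_diff add: norm_mult)
  also have "\<dots> \<le> ((a' - a) + (b' - b)) * cmod z"
    using min_lipschitz[of a b a' b'] assms by (intro mult_right_mono) simp_all
  finally show ?thesis .
qed

text \<open>Monotone convergence 0 <= f_i -> f of random variables is also convergence in L2,
  by dominated convergence with dominating function f^2.\<close>

lemma monotone_square_convergence:
  assumes f: "rand_var M f" and fs: "\<And>i. fs i \<in> borel_measurable M"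
    and nonneg: "\<And>i x. 0 \<le> fs i x" and below: "\<And>i x. fs i x \<le> f x"
    and lim: "\<And>x. (\<lambda>i. fs i x) \<longlonglongrightarrow> f x"
  shows "(\<lambda>i. LINT x|M. (f x - fs i x)\<^sup>2) \<longlonglongrightarrow> 0"
proof -
  have [measurable]: "f \<in> borel_measurable M" "\<And>i. fs i \<in> borel_measurable M"
    using f fs by (auto simp: rand_var_def)
  have "(\<lambda>i. LINT x|M. (f x - fs i x)\<^sup>2) \<longlonglongrightarrow> (LINT x|M. 0)"
  proof (rule integral_dominated_convergence[where w="\<lambda>x. (f x)\<^sup>2"])
    show "integrable M (\<lambda>x. (f x)\<^sup>2)" using f by (simp add: rand_var_def)
    show "AE x in M. (\<lambda>i. (f x - fs i x)\<^sup>2) \<longlonglongrightarrow> 0"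
    proof (rule AE_I2)
      fix x
      have "(\<lambda>i. (f x - fs i x)\<^sup>2) \<longlonglongrightarrow> (f x - f x)\<^sup>2"
        by (intro tendsto_intros lim)
      then show "(\<lambda>i. (f x - fs i x)\<^sup>2) \<longlonglongrightarrow> 0" by simp
    qed
    show "AE x in M. norm ((f x - fs i x)\<^sup>2) \<le> (f x)\<^sup>2" for i
    proof (rule AE_I2)
      fix x
      have "0 \<le> f x - fs i x" "f x - fs i x \<le> f x"
        using below[of i x] nonneg[of i x] by auto
      then show "norm ((f x - fs i x)\<^sup>2) \<le> (f x)\<^sup>2" by (simp add: power_mono)
    qed
  qed measurable
  then show ?thesis by simp
qed

context prob_space
begin

lemma L2_integrable_norm:
  assumes "u \<in> L2 M"
  shows "integrable M (\<lambda>x. cmod (u x))" and "(LINT x|M. cmod (u x)) \<le> l2norm M u"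
proof -
  have [measurable]: "(\<lambda>x. cmod (u x)) \<in> borel_measurable M"
    and sq: "integrable M (\<lambda>x. (cmod (u x))\<^sup>2)"
    using L2_cmod_rand_var[OF assms] by (auto simp: rand_var_def)
  show "integrable M (\<lambda>x. cmod (u x))"
    by (rule square_integrable_imp_integrable) (measurable, rule sq)
  have "(LINT x|M. 1 * cmod (u x)) \<le> sqrt (LINT x|M. 1\<^sup>2) * sqrt (LINT x|M. (cmod (u x))\<^sup>2)"
    by (rule integral_Cauchy_Schwarz[of "\<lambda>_. 1"]) (simp_all add: sq)
  then show "(LINT x|M. cmod (u x)) \<le> l2norm M u"
    by (simp add: l2norm_def prob_space)
qed

text \<open>Pointwise estimate for 0 <= k <= f with gap e = f - k: by the Lipschitz bound on min,
  |(Q_k u - Q_f u)(y)| <= integral e|u| + e(y) integral |u| <= ||u|| (||e|| + e(y)).\<close>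

lemma quant_pos_diff_pointwise:
  assumes k: "rand_var M k" "\<And>x. 0 \<le> k x" and f: "rand_var M f" and kf: "\<And>x. k x \<le> f x"
    and u: "u \<in> L2 M"
  shows "cmod (quant_pos M k u y - quant_pos M f u y)
    \<le> l2norm M u * (sqrt (LINT x|M. (f x - k x)\<^sup>2) + (f y - k y))"
proof -
  define e where "e x = f x - k x" for x
  have e0: "0 \<le> e x" for x using kf[of x] by (simp add: e_def)
  have e: "rand_var M e"
    unfolding e_def[abs_def] by (rule rand_var_gap[OF k(1) f k(2) kf])
  have um: "(\<lambda>x. cmod (u x)) \<in> borel_measurable M"
    and u2: "integrable M (\<lambda>x. (cmod (u x))\<^sup>2)"
    using L2_cmod_rand_var[OF u] by (auto simp: rand_var_def)
  have em: "e \<in> borel_measurable M" and e2: "integrable M (\<lambda>x. (e x)\<^sup>2)"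
    using e by (auto simp: rand_var_def)
  have eu: "integrable M (\<lambda>x. e x * cmod (u x))"
    by (rule integrable_mult_square_integrable[OF em um e2 u2])
  have CS: "(LINT x|M. e x * cmod (u x)) \<le> sqrt (LINT x|M. (e x)\<^sup>2) * l2norm M u"
    unfolding l2norm_def by (rule integral_Cauchy_Schwarz[OF em um e2 u2 e0 norm_ge_zero])
  let ?Kk = "\<lambda>x. complex_of_real (min (k x) (k y)) * u x"
  let ?Kf = "\<lambda>x. complex_of_real (min (f x) (f y)) * u x"
  have kernel_bound: "cmod (?Kk x - ?Kf x) \<le> e x * cmod (u x) + e y * cmod (u x)" for x
    using min_kernel_diff_bound[OF kf kf, of x y "u x"] by (simp add: e_def distrib_right)
  have f0: "0 \<le> f x" for x using order_trans[OF k(2) kf] .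
  have "integrable M ?Kk" "integrable M ?Kf"
    using quant_kernel_integrable[OF k k(2) u] quant_kernel_integrable[OF f f0 f0 u] k(2) f0 by blast+
  then have "quant_pos M k u y - quant_pos M f u y = (LINT x|M. ?Kk x - ?Kf x)"
    unfolding quant_pos_def by simp
  also have "cmod \<dots> \<le> (LINT x|M. cmod (?Kk x - ?Kf x))"
    by (rule integral_norm_bound)
  also have "\<dots> \<le> (LINT x|M. e x * cmod (u x) + e y * cmod (u x))"
  proof (rule integral_mono_AE')
    show "integrable M (\<lambda>x. e x * cmod (u x) + e y * cmod (u x))"
      using eu L2_integrable_norm(1)[OF u] by simp
    show "AE x in M. cmod (?Kk x - ?Kf x) \<le> e x * cmod (u x) + e y * cmod (u x)"
      using kernel_bound by simp
    show "AE x in M. 0 \<le> e x * cmod (u x) + e y * cmod (u x)"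
      using e0 by simp
  qed
  also have "\<dots> = (LINT x|M. e x * cmod (u x)) + e y * (LINT x|M. cmod (u x))"
    using eu L2_integrable_norm(1)[OF u] by simp
  also have "\<dots> \<le> sqrt (LINT x|M. (e x)\<^sup>2) * l2norm M u + e y * l2norm M u"
    by (rule add_mono[OF CS mult_left_mono[OF L2_integrable_norm(2)[OF u] e0]])
  finally show ?thesis by (simp add: e_def algebra_simps)
qed

text \<open>Integrating the square of the pointwise estimate gives ||Q_k u - Q_f u|| <= 2 ||e|| ||u||.\<close>

lemma quant_pos_diff_l2norm:
  assumes k: "rand_var M k" "\<And>x. 0 \<le> k x" and f: "rand_var M f" and kf: "\<And>x. k x \<le> f x"
    and u: "u \<in> L2 M"
  shows "l2norm M (\<lambda>y. quant_pos M k u y - quant_pos M f u y)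
    \<le> 2 * sqrt (LINT x|M. (f x - k x)\<^sup>2) * l2norm M u"
proof -
  define N where "N = sqrt (LINT x|M. (f x - k x)\<^sup>2)"
  define c where "c = l2norm M u"
  have N0: "0 \<le> N"
    unfolding N_def by (intro real_sqrt_ge_zero integral_nonneg_AE) simp
  have c0: "0 \<le> c"
    unfolding c_def by (rule l2norm_nonneg)
  have e2: "integrable M (\<lambda>x. (f x - k x)\<^sup>2)"
    using rand_var_gap[OF k(1) f k(2) kf] by (simp add: rand_var_def)
  have N2: "(LINT x|M. (f x - k x)\<^sup>2) = N\<^sup>2"
    unfolding N_def by (simp add: integral_nonneg_AE)
  have pointwise: "(cmod (quant_pos M k u y - quant_pos M f u y))\<^sup>2
      \<le> c\<^sup>2 * (2 * N\<^sup>2 + 2 * (f y - k y)\<^sup>2)" for y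
  proof -
    have "cmod (quant_pos M k u y - quant_pos M f u y) \<le> c * (N + (f y - k y))"
      unfolding c_def N_def by (rule quant_pos_diff_pointwise[OF k f kf u])
    then have "(cmod (quant_pos M k u y - quant_pos M f u y))\<^sup>2 \<le> (c * (N + (f y - k y)))\<^sup>2"
      by (rule power_mono[OF _ norm_ge_zero])
    also have "\<dots> = c\<^sup>2 * (N + (f y - k y))\<^sup>2"
      by (rule power_mult_distrib)
    also have "\<dots> \<le> c\<^sup>2 * (2 * N\<^sup>2 + 2 * (f y - k y)\<^sup>2)"
    proof (rule mult_left_mono)
      show "(N + (f y - k y))\<^sup>2 \<le> 2 * N\<^sup>2 + 2 * (f y - k y)\<^sup>2"
        using sum_squares_bound[of N "f y - k y"] unfolding power2_sum by linarith
    qed simp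
    finally show ?thesis .
  qed
  have "(LINT y|M. (cmod (quant_pos M k u y - quant_pos M f u y))\<^sup>2)
      \<le> (LINT y|M. c\<^sup>2 * (2 * N\<^sup>2 + 2 * (f y - k y)\<^sup>2))"
  proof (rule integral_mono_AE')
    show "integrable M (\<lambda>y. c\<^sup>2 * (2 * N\<^sup>2 + 2 * (f y - k y)\<^sup>2))"
      using e2 by simp
  qed (use pointwise in simp_all)
  also have "\<dots> = c\<^sup>2 * (2 * N\<^sup>2 + 2 * (LINT y|M. (f y - k y)\<^sup>2))"
    using e2 by (simp add: prob_space)
  also have "\<dots> = (2 * N * c)\<^sup>2"
    unfolding N2 by (simp add: power_mult_distrib)
  finally have "l2norm M (\<lambda>y. quant_pos M k u y - quant_pos M f u y) \<le> sqrt ((2 * N * c)\<^sup>2)"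
    unfolding l2norm_def by (rule real_sqrt_le_mono)
  then show ?thesis using N0 c0 by (simp add: N_def c_def)
qed

lemma op_norm_quant_pos_diff:
  assumes k: "rand_var M k" "\<And>x. 0 \<le> k x" and f: "rand_var M f" and kf: "\<And>x. k x \<le> f x"
  shows "op_norm M (\<lambda>g y. quant_pos M k g y - quant_pos M f g y)
    \<le> ennreal (2 * sqrt (LINT x|M. (f x - k x)\<^sup>2))"
  unfolding op_norm_def
proof (rule SUP_least)
  fix g assume g: "g \<in> {g \<in> L2 M. l2norm M g \<le> 1}"
  have "l2norm M (\<lambda>y. quant_pos M k g y - quant_pos M f g y)
      \<le> 2 * sqrt (LINT x|M. (f x - k x)\<^sup>2) * l2norm M g"
    using g by (intro quant_pos_diff_l2norm[OF k f kf]) simp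
  also have "\<dots> \<le> 2 * sqrt (LINT x|M. (f x - k x)\<^sup>2)"
  proof (rule mult_right_le_one_le[OF _ l2norm_nonneg])
    show "0 \<le> 2 * sqrt (LINT x|M. (f x - k x)\<^sup>2)" by (simp add: integral_nonneg_AE)
    show "l2norm M g \<le> 1" using g by simp
  qed
  finally show "ennreal (l2norm M (\<lambda>y. quant_pos M k g y - quant_pos M f g y))
      \<le> ennreal (2 * sqrt (LINT x|M. (f x - k x)\<^sup>2))"
    by (rule ennreal_leI)
qed

lemma quant_monotone_convergence:
  assumes fs: "\<And>i. rand_var M (fs i)" and f: "rand_var M f" and start: "\<And>x. 0 \<le> fs 0 x"
    and inc: "\<And>i x. fs i x \<le> fs (Suc i) x" and lim: "\<And>x. (\<lambda>i. fs i x) \<longlonglongrightarrow> f x"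
  shows "(\<lambda>i. op_norm M (\<lambda>g y. quant M (fs i) g y - quant M f g y)) \<longlonglongrightarrow> 0"
proof -
  have mono: "incseq (\<lambda>i. fs i x)" for x
    by (rule incseq_SucI) (rule inc)
  have below: "fs i x \<le> f x" for i x
    by (rule incseq_le[OF mono lim])
  have nonneg: "0 \<le> fs i x" for i x
    using start[of x] incseqD[OF mono[of x], of 0 i] by simp
  have f0: "0 \<le> f x" for x using order_trans[OF nonneg below] .
  have err: "(\<lambda>i. LINT x|M. (f x - fs i x)\<^sup>2) \<longlonglongrightarrow> 0"
    using fs by (intro monotone_square_convergence[OF f _ nonneg below lim]) (simp add: rand_var_def)
  have bound: "op_norm M (\<lambda>g y. quant M (fs i) g y - quant M f g y)
      \<le> ennreal (2 * sqrt (LINT x|M. (f x - fs i x)\<^sup>2))" for i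
    unfolding quant_nonneg[OF nonneg] quant_nonneg[OF f0]
    by (rule op_norm_quant_pos_diff[OF fs nonneg f below])
  have "(\<lambda>i. ennreal (2 * sqrt (LINT x|M. (f x - fs i x)\<^sup>2))) \<longlonglongrightarrow> ennreal (2 * sqrt 0)"
    by (intro tendsto_ennrealI tendsto_intros err)
  then have bound_lim: "(\<lambda>i. ennreal (2 * sqrt (LINT x|M. (f x - fs i x)\<^sup>2))) \<longlonglongrightarrow> 0"
    by simp
  show ?thesis
    by (rule tendsto_sandwich[OF _ _ tendsto_const bound_lim]) (simp_all add: bound)
qed

end

theorem theorem3p1:
  fixes M :: "'a measure"
  assumes "prob_space M"
  shows
   "(\<forall>A\<in>sets M. op_eq M (quant M (indicator A)) (mu_op M A))
    \<and> (\<forall>f (\<alpha>::real). rand_var M f \<longrightarrow>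
         op_eq M (quant M (\<lambda>x. \<alpha> * f x)) (\<lambda>g y. complex_of_real \<alpha> * quant M f g y))
    \<and> (\<forall>(fs :: nat \<Rightarrow> 'a \<Rightarrow> real) f.
         (\<forall>i. rand_var M (fs i)) \<and> rand_var M f \<and> (\<forall>x. 0 \<le> fs 0 x)
         \<and> (\<forall>i x. fs i x \<le> fs (Suc i) x) \<and> (\<forall>x. (\<lambda>i. fs i x) \<longlonglongrightarrow> f x)
         \<longrightarrow> (\<lambda>i. op_norm M (\<lambda>g y. quant M (fs i) g y - quant M f g y)) \<longlonglongrightarrow> 0)
    \<and> (\<forall>f g h. rand_var M f \<and> rand_var M g \<and> rand_var M h
         \<and> (\<forall>x. f x \<noteq> 0 \<longrightarrow> g x = 0 \<and> h x = 0) \<and> (\<forall>x. g x \<noteq> 0 \<longrightarrow> h x = 0)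
         \<longrightarrow> op_eq M (quant M (\<lambda>x. f x + g x + h x))
               (\<lambda>u y. quant M (\<lambda>x. f x + g x) u y + quant M (\<lambda>x. f x + h x) u y
                    + quant M (\<lambda>x. g x + h x) u y
                    - quant M f u y - quant M g u y - quant M h u y))"
proof -
  interpret prob_space M by (rule assms)
  show ?thesis
  proof (intro conjI allI impI ballI; (elim conjE)?)
    fix A :: "'a set"
    show "op_eq M (quant M (indicator A)) (mu_op M A)"
      by (simp add: op_eq_def quant_indicator)
  next
    fix f and \<alpha> :: real
    show "op_eq M (quant M (\<lambda>x. \<alpha> * f x)) (\<lambda>g y. complex_of_real \<alpha> * quant M f g y)"
      by (simp add: op_eq_def quant_scale)
  next
    fix fs :: "nat \<Rightarrow> 'a \<Rightarrow> real" and f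
    assume "\<forall>i. rand_var M (fs i)" "rand_var M f" "\<forall>x. 0 \<le> fs 0 x"
      "\<forall>i x. fs i x \<le> fs (Suc i) x" "\<forall>x. (\<lambda>i. fs i x) \<longlonglongrightarrow> f x"
    then show "(\<lambda>i. op_norm M (\<lambda>g y. quant M (fs i) g y - quant M f g y)) \<longlonglongrightarrow> 0"
      by (intro quant_monotone_convergence) auto
  next
    fix f g h
    assume rv: "rand_var M f" "rand_var M g" "rand_var M h"
      and supp: "\<forall>x. f x \<noteq> 0 \<longrightarrow> g x = 0 \<and> h x = 0" "\<forall>x. g x \<noteq> 0 \<longrightarrow> h x = 0"
    have disj: "f x * g x = 0" "f x * h x = 0" "g x * h x = 0" for x
      using supp by auto
    show "op_eq M (quant M (\<lambda>x. f x + g x + h x))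
        (\<lambda>u y. quant M (\<lambda>x. f x + g x) u y + quant M (\<lambda>x. f x + h x) u y
          + quant M (\<lambda>x. g x + h x) u y - quant M f u y - quant M g u y - quant M h u y)"
      by (simp add: op_eq_def quant_disjoint_sum[OF rv disj])
  qed
qed

end
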